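(* If $X$ is a connected weighted bipartite graph whose adjacency matrix $A(X)$ is nonsingular, then no vertex of $X$ is sedentary.
   Context: Graphs are simple, connected, undirected, with nonzero real edge weights; $A(X)$ is the weighted adjacency matrix and $U(t)=e^{itA(X)}$. A vertex $u$ is sedentary if $\inf_{t>0}|U(t)_{u,u}|\ge C$ for some $0<C\le1$, and not sedentary if this infimum is $0$. *)

theory Defs
  imports "HOL-Analysis.Analysis"
begin

text \<open>Weighted graphs on a finite vertex type 'n, given by a real weight matrix W:
  vertices i and j are adjacent iff W i j is nonzero (the edge weight).\<close>

definition weighted_simple_graph :: "real^'n^'n \<Rightarrow> bool" where
  "weighted_simple_graph W \<longleftrightarrow> (\<forall>i j. W $ i $ j = W $ j $ i) \<and> (\<forall>i. W $ i $ i = 0)"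

definition adj :: "real^'n^'n \<Rightarrow> 'n \<Rightarrow> 'n \<Rightarrow> bool" where
  "adj W i j \<longleftrightarrow> W $ i $ j \<noteq> 0"

definition graph_connected :: "real^'n^'n \<Rightarrow> bool" where
  "graph_connected W \<longleftrightarrow> (\<forall>u v. (adj W)\<^sup>*\<^sup>* u v)"

definition graph_bipartite :: "real^'n^'n \<Rightarrow> bool" where
  "graph_bipartite W \<longleftrightarrow> (\<exists>S :: 'n set. \<forall>i j. adj W i j \<longrightarrow> (i \<in> S \<longleftrightarrow> j \<notin> S))"

text \<open>Matrix powers and the transition matrix U(t) = exp(i t A), as its entrywise power series.\<close>

fun mat_pow :: "'a::comm_ring_1^'n^'n \<Rightarrow> nat \<Rightarrow> 'a^'n^'n" where
  "mat_pow A 0 = mat 1"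
| "mat_pow A (Suc k) = A ** mat_pow A k"

definition cmat :: "real^'n^'n \<Rightarrow> complex^'n^'n" where
  "cmat A = (\<chi> i j. complex_of_real (A $ i $ j))"

definition transition :: "real^'n^'n \<Rightarrow> real \<Rightarrow> complex^'n^'n" where
  "transition A t = (\<chi> i j. \<Sum>k. (\<i> * complex_of_real t) ^ k / fact k * (mat_pow (cmat A) k $ i $ j))"

definition sedentary :: "real^'n^'n \<Rightarrow> 'n \<Rightarrow> bool" where
  "sedentary A u \<longleftrightarrow> (\<exists>C. 0 < C \<and> C \<le> 1 \<and> (INF t\<in>{0<..}. cmod (transition A t $ u $ u)) \<ge> C)"

end

theory Submission
  imports Defs
begin

(* Write U(t) = cos(tA) + i sin(tA). Odd powers of a bipartite adjacency matrix vanish on the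
   diagonal, so sin(tA)_uu = 0 and |U(t)_uu| = |cos(tA)_uu|; if u were sedentary, continuity and
   cos(0) = 1 would force cos(tA)_uu >= c > 0 for all t > 0. But cos(tA) is the derivative of
   A^-1 sin(tA), whose entries stay bounded because, A being symmetric, every column of cos(tA)
   together with the same column of sin(tA) has unit norm for all t. A bounded function cannot
   grow like c t. *)

definition mat_power_series :: "(nat \<Rightarrow> real) \<Rightarrow> real^'n^'n \<Rightarrow> real \<Rightarrow> real^'n^'n" where
  "mat_power_series a A t = (\<chi> i j. \<Sum>k. a k * mat_pow A k $ i $ j * t ^ k)"

abbreviation mat_cos :: "real^'n^'n \<Rightarrow> real \<Rightarrow> real^'n^'n" where
  "mat_cos \<equiv> mat_power_series cos_coeff"

abbreviation mat_sin :: "real^'n^'n \<Rightarrow> real \<Rightarrow> real^'n^'n" where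
  "mat_sin \<equiv> mat_power_series sin_coeff"

lemma abs_mat_pow_entry_le:
  fixes A :: "real^'n^'n"
  defines "N \<equiv> (\<Sum>i\<in>UNIV. \<Sum>j\<in>UNIV. \<bar>A $ i $ j\<bar>)"
  shows "\<bar>mat_pow A k $ i $ j\<bar> \<le> N ^ k"
proof (induction k arbitrary: i j)
  case 0
  then show ?case by (simp add: mat_def)
next
  case (Suc k)
  have row: "(\<Sum>w\<in>UNIV. \<bar>A $ i $ w\<bar>) \<le> N"
    unfolding N_def by (rule member_le_sum[where f = "\<lambda>i. \<Sum>j\<in>UNIV. \<bar>A $ i $ j\<bar>"]) (auto simp: sum_nonneg)
  have "\<bar>mat_pow A (Suc k) $ i $ j\<bar> \<le> (\<Sum>w\<in>UNIV. \<bar>A $ i $ w\<bar> * \<bar>mat_pow A k $ w $ j\<bar>)"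
    by (simp add: matrix_matrix_mult_def sum_abs[THEN order_trans] abs_mult)
  also have "\<dots> \<le> (\<Sum>w\<in>UNIV. \<bar>A $ i $ w\<bar>) * N ^ k"
    by (auto simp: sum_distrib_right intro!: sum_mono mult_left_mono Suc)
  also have "\<dots> \<le> N ^ Suc k"
    using row by (simp add: N_def sum_nonneg mult_right_mono)
  finally show ?case .
qed

lemma summable_mat_power_series_entry:
  fixes a :: "nat \<Rightarrow> real" and A :: "real^'n^'n"
  assumes "\<And>r. summable (\<lambda>k. \<bar>a k\<bar> * r ^ k)"
  shows "summable (\<lambda>k. a k * mat_pow A k $ i $ j * t ^ k)"
proof -
  define N where "N = (\<Sum>i\<in>UNIV. \<Sum>j\<in>UNIV. \<bar>A $ i $ j\<bar>)"
  have "\<bar>a k * mat_pow A k $ i $ j * t ^ k\<bar> \<le> \<bar>a k\<bar> * (N * \<bar>t\<bar>) ^ k" for k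
    using abs_mat_pow_entry_le[of A k i j]
    by (simp add: N_def abs_mult power_abs power_mult_distrib mult.assoc mult_left_mono mult_right_mono)
  then show ?thesis
    by (intro summable_comparison_test'[OF assms, where N = 0]) auto
qed

lemma summable_abs_diffs:
  fixes a :: "nat \<Rightarrow> real"
  assumes "\<And>r. summable (\<lambda>k. \<bar>a k\<bar> * r ^ k)"
  shows "summable (\<lambda>k. \<bar>diffs a k\<bar> * r ^ k)"
proof -
  have "diffs (\<lambda>k. \<bar>a k\<bar>) = (\<lambda>k. \<bar>diffs a k\<bar>)"
    by (simp add: diffs_def abs_mult del: of_nat_Suc)
  then show ?thesis
    using termdiff_converges_all[of "\<lambda>k. \<bar>a k\<bar>", OF assms] by simp
qed

lemma has_real_derivative_mat_power_series:
  fixes a :: "nat \<Rightarrow> real" and A :: "real^'n^'n"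
  assumes a: "\<And>r. summable (\<lambda>k. \<bar>a k\<bar> * r ^ k)"
  shows "((\<lambda>t. mat_power_series a A t $ i $ j) has_real_derivative
           (A ** mat_power_series (diffs a) A t) $ i $ j) (at t)"
proof -
  let ?c = "\<lambda>k. a k * mat_pow A k $ i $ j"
  let ?d = "\<lambda>w k. A $ i $ w * (diffs a k * mat_pow A k $ w $ j * t ^ k)"
  have summable_d: "summable (?d w)" for w
    by (intro summable_mult summable_mat_power_series_entry summable_abs_diffs a)
  have "((\<lambda>t. \<Sum>k. ?c k * t ^ k) has_real_derivative (\<Sum>k. diffs ?c k * t ^ k)) (at t)"
    by (rule termdiffs_strong_converges_everywhere) (rule summable_mat_power_series_entry[OF a])
  also have "(\<Sum>k. diffs ?c k * t ^ k) = (\<Sum>k. \<Sum>w\<in>UNIV. ?d w k)"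
    by (simp add: diffs_def matrix_matrix_mult_def sum_distrib_left sum_distrib_right mult_ac)
  also have "\<dots> = (\<Sum>w\<in>UNIV. A $ i $ w * mat_power_series (diffs a) A t $ w $ j)"
    by (simp add: suminf_sum summable_d suminf_mult summable_mat_power_series_entry summable_abs_diffs a
        mat_power_series_def)
  finally show ?thesis
    by (simp add: mat_power_series_def matrix_matrix_mult_def)
qed

lemma mat_power_series_at_0: "mat_power_series a A 0 $ i $ j = a 0 * mat 1 $ i $ j"
  unfolding mat_power_series_def vec_lambda_beta powser_zero by simp

lemma summable_abs_cos_coeff: "summable (\<lambda>k. \<bar>cos_coeff k\<bar> * r ^ k)"
proof (rule summable_norm_cancel)
  show "summable (\<lambda>k. norm (\<bar>cos_coeff k\<bar> * r ^ k))"
    using summable_norm_cos[of "\<bar>r\<bar>"] by (simp add: abs_mult power_abs)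
qed

lemma summable_abs_sin_coeff: "summable (\<lambda>k. \<bar>sin_coeff k\<bar> * r ^ k)"
proof (rule summable_norm_cancel)
  show "summable (\<lambda>k. norm (\<bar>sin_coeff k\<bar> * r ^ k))"
    using summable_norm_sin[of "\<bar>r\<bar>"] by (simp add: abs_mult power_abs)
qed

lemma has_real_derivative_mat_cos:
  "((\<lambda>t. mat_cos A t $ i $ j) has_real_derivative - (A ** mat_sin A t) $ i $ j) (at t)"
proof -
  have "mat_power_series (\<lambda>k. - sin_coeff k) A t = - mat_sin A t"
    unfolding mat_power_series_def
    by (simp add: vec_eq_iff suminf_minus[OF summable_mat_power_series_entry[OF summable_abs_sin_coeff]])
  then show ?thesis
    using has_real_derivative_mat_power_series[OF summable_abs_cos_coeff, of A i j t]
    by (simp add: diffs_cos_coeff matrix_matrix_mult_def sum_negf)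
qed

lemma has_real_derivative_mat_sin:
  "((\<lambda>t. mat_sin A t $ i $ j) has_real_derivative (A ** mat_cos A t) $ i $ j) (at t)"
  using has_real_derivative_mat_power_series[OF summable_abs_sin_coeff] unfolding diffs_sin_coeff .

lemma i_power_div_fact: "\<i> ^ k / fact k = Complex (cos_coeff k) (sin_coeff k)"
proof (cases "even k")
  case True
  then obtain m where k: "k = 2 * m" by blast
  have "\<i> ^ k = complex_of_real ((- 1) ^ m)" by (simp add: k power_mult)
  then show ?thesis by (simp add: cos_coeff_def sin_coeff_def k Complex_eq)
next
  case False
  then obtain m where k: "k = 2 * m + 1" by (rule oddE)
  have "\<i> ^ k = \<i> * complex_of_real ((- 1) ^ m)" by (simp add: k power_mult)
  then show ?thesis by (simp add: cos_coeff_def sin_coeff_def k Complex_eq)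
qed

lemma cmat_mult: "cmat (A ** B) = cmat A ** cmat B"
  by (simp add: cmat_def matrix_matrix_mult_def vec_eq_iff)

lemma mat_pow_cmat: "mat_pow (cmat A) k = cmat (mat_pow A k)"
proof (induction k)
  case 0
  then show ?case by (simp add: cmat_def mat_def vec_eq_iff)
next
  case (Suc k)
  then show ?case by (simp add: cmat_mult)
qed

lemma transition_term_eq:
  "(\<i> * complex_of_real t) ^ k / fact k * mat_pow (cmat A) k $ i $ j
     = Complex (cos_coeff k * mat_pow A k $ i $ j * t ^ k) (sin_coeff k * mat_pow A k $ i $ j * t ^ k)"
proof -
  have "(\<i> * complex_of_real t) ^ k / fact k * mat_pow (cmat A) k $ i $ j
      = \<i> ^ k / fact k * complex_of_real (mat_pow A k $ i $ j * t ^ k)"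
    unfolding mat_pow_cmat unfolding cmat_def vec_lambda_beta by (simp add: power_mult_distrib)
  then show ?thesis
    unfolding i_power_div_fact by (simp add: complex_eq_iff)
qed

lemma transition_eq_Complex:
  "transition A t $ i $ j = Complex (mat_cos A t $ i $ j) (mat_sin A t $ i $ j)"
proof -
  have "summable (\<lambda>k. cos_coeff k * mat_pow A k $ i $ j * t ^ k)"
    by (rule summable_mat_power_series_entry[OF summable_abs_cos_coeff])
  moreover have "summable (\<lambda>k. sin_coeff k * mat_pow A k $ i $ j * t ^ k)"
    by (rule summable_mat_power_series_entry[OF summable_abs_sin_coeff])
  ultimately have "(\<lambda>k. (\<i> * complex_of_real t) ^ k / fact k * mat_pow (cmat A) k $ i $ j)
      sums Complex (mat_cos A t $ i $ j) (mat_sin A t $ i $ j)"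
    unfolding transition_term_eq sums_complex_iff complex.sel mat_power_series_def vec_lambda_beta
    by (simp add: summable_sums)
  then show ?thesis
    unfolding transition_def vec_lambda_beta by (rule sums_unique[symmetric])
qed

lemma sum_mult_mat_mult_symmetric:
  fixes A X Y :: "real^'n^'n"
  assumes "transpose A = A"
  shows "(\<Sum>v\<in>UNIV. X $ v $ u * (A ** Y) $ v $ u) = (\<Sum>v\<in>UNIV. Y $ v $ u * (A ** X) $ v $ u)"
proof -
  have "(\<Sum>v\<in>UNIV. X $ v $ u * (A ** Y) $ v $ u) = (transpose X ** (A ** Y)) $ u $ u"
    by (simp add: matrix_matrix_mult_def transpose_def)
  also have "\<dots> = transpose (transpose X ** (A ** Y)) $ u $ u"
    by (simp add: transpose_def)
  also have "\<dots> = (transpose Y ** (A ** X)) $ u $ u"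
    by (simp add: matrix_transpose_mul assms matrix_mul_assoc)
  also have "\<dots> = (\<Sum>v\<in>UNIV. Y $ v $ u * (A ** X) $ v $ u)"
    by (simp add: matrix_matrix_mult_def transpose_def)
  finally show ?thesis .
qed

lemma sum_squares_mat_cos_mat_sin_column:
  fixes A :: "real^'n^'n"
  assumes "transpose A = A"
  shows "(\<Sum>v\<in>UNIV. (mat_cos A t $ v $ u)\<^sup>2 + (mat_sin A t $ v $ u)\<^sup>2) = 1"
proof -
  define E where "E t = (\<Sum>v\<in>UNIV. (mat_cos A t $ v $ u)\<^sup>2 + (mat_sin A t $ v $ u)\<^sup>2)" for t
  have "(E has_real_derivative 0) (at s)" for s
  proof -
    let ?C = "mat_cos A s" and ?S = "mat_sin A s"
    have "((\<lambda>t. (mat_cos A t $ v $ u)\<^sup>2) has_real_derivative 2 * ?C $ v $ u * - (A ** ?S) $ v $ u) (at s)"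
      for v
      using DERIV_power[OF has_real_derivative_mat_cos, where n = 2] by (simp add: mult_ac)
    moreover have "((\<lambda>t. (mat_sin A t $ v $ u)\<^sup>2) has_real_derivative 2 * ?S $ v $ u * (A ** ?C) $ v $ u) (at s)"
      for v
      using DERIV_power[OF has_real_derivative_mat_sin, where n = 2] by (simp add: mult_ac)
    ultimately have "(E has_real_derivative
        (\<Sum>v\<in>UNIV. 2 * ?C $ v $ u * - (A ** ?S) $ v $ u + 2 * ?S $ v $ u * (A ** ?C) $ v $ u)) (at s)"
      unfolding E_def by (intro DERIV_sum DERIV_add)
    also have "(\<Sum>v\<in>UNIV. 2 * ?C $ v $ u * - (A ** ?S) $ v $ u + 2 * ?S $ v $ u * (A ** ?C) $ v $ u) = 0"
      using sum_mult_mat_mult_symmetric[OF assms, of ?C u ?S]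
      by (simp add: sum_subtractf mult.assoc flip: sum_distrib_left)
    finally show ?thesis .
  qed
  then have "E t = E 0"
    by (intro DERIV_isconst_all) auto
  also have "E 0 = (\<Sum>v\<in>UNIV. if v = u then 1 else 0)"
    unfolding E_def by (intro sum.cong) (auto simp: mat_power_series_at_0 mat_def)
  also have "\<dots> = 1"
    by simp
  finally show ?thesis
    by (simp add: E_def)
qed

lemma abs_mat_sin_le_1:
  fixes A :: "real^'n^'n"
  assumes "transpose A = A"
  shows "\<bar>mat_sin A t $ v $ u\<bar> \<le> 1"
proof -
  have "(mat_sin A t $ v $ u)\<^sup>2 \<le> (\<Sum>w\<in>UNIV. (mat_cos A t $ w $ u)\<^sup>2 + (mat_sin A t $ w $ u)\<^sup>2)"
    by (rule order_trans[OF _ member_le_sum[of v]]) auto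
  then show ?thesis
    by (simp add: sum_squares_mat_cos_mat_sin_column[OF assms] abs_square_le_1)
qed

lemma mat_pow_sign_flip:
  fixes A :: "real^'n^'n" and s :: "'n \<Rightarrow> real"
  assumes s_sq: "\<And>i. s i * s i = 1" and flip: "\<And>i j. s i * s j * A $ i $ j = - A $ i $ j"
  shows "s i * s j * mat_pow A k $ i $ j = (- 1) ^ k * mat_pow A k $ i $ j"
proof (induction k arbitrary: i j)
  case 0
  then show ?case by (simp add: mat_def s_sq)
next
  case (Suc k)
  have "s i * s j * mat_pow A (Suc k) $ i $ j
      = (\<Sum>w\<in>UNIV. (s i * s w * A $ i $ w) * (s w * s j * mat_pow A k $ w $ j))"
    unfolding mat_pow.simps matrix_matrix_mult_def vec_lambda_beta sum_distrib_left
  proof (rule sum.cong)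
    fix w
    have "(s i * s w * A $ i $ w) * (s w * s j * mat_pow A k $ w $ j)
        = s i * s j * (A $ i $ w * mat_pow A k $ w $ j) * (s w * s w)"
      by (simp add: mult_ac)
    then show "s i * s j * (A $ i $ w * mat_pow A k $ w $ j)
        = (s i * s w * A $ i $ w) * (s w * s j * mat_pow A k $ w $ j)"
      by (simp only: s_sq mult_1_right)
  qed simp
  also have "\<dots> = (\<Sum>w\<in>UNIV. - A $ i $ w * ((- 1) ^ k * mat_pow A k $ w $ j))"
    by (simp only: flip Suc)
  also have "\<dots> = (- 1) ^ Suc k * mat_pow A (Suc k) $ i $ j"
    by (simp add: matrix_matrix_mult_def sum_distrib_left sum_negf mult_ac)
  finally show ?case .
qed

lemma bipartite_mat_pow_diag_odd:
  fixes A :: "real^'n^'n"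
  assumes "graph_bipartite A" and "odd k"
  shows "mat_pow A k $ v $ v = 0"
proof -
  obtain S where S: "\<And>i j. adj A i j \<Longrightarrow> i \<in> S \<longleftrightarrow> j \<notin> S"
    using assms(1) unfolding graph_bipartite_def by blast
  define s where "s i = (if i \<in> S then 1 else - 1 :: real)" for i
  have "s i * s j * A $ i $ j = - A $ i $ j" for i j
    using S[of i j] by (cases "A $ i $ j = 0") (auto simp: adj_def s_def)
  then have "s v * s v * mat_pow A k $ v $ v = (- 1) ^ k * mat_pow A k $ v $ v"
    by (rule mat_pow_sign_flip[rotated]) (simp add: s_def)
  then show ?thesis
    using assms(2) by (simp add: s_def split: if_splits)
qed

lemma bipartite_mat_sin_diag:
  fixes A :: "real^'n^'n"
  assumes "graph_bipartite A"
  shows "mat_sin A t $ v $ v = 0"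
proof -
  have "(\<lambda>k. sin_coeff k * mat_pow A k $ v $ v * t ^ k) = (\<lambda>k. 0)"
  proof
    show "sin_coeff k * mat_pow A k $ v $ v * t ^ k = 0" for k
      by (cases "even k") (simp_all add: sin_coeff_def bipartite_mat_pow_diag_odd[OF assms])
  qed
  then show ?thesis
    unfolding mat_power_series_def vec_lambda_beta by simp
qed

lemma continuous_ge_of_abs_ge:
  fixes f :: "real \<Rightarrow> real"
  assumes cont: "\<And>t. isCont f t" and f0: "0 < f 0" and "0 < c"
    and bound: "\<And>t. 0 < t \<Longrightarrow> c \<le> \<bar>f t\<bar>" and "0 < t"
  shows "c \<le> f t"
proof (rule ccontr)
  assume "\<not> c \<le> f t"
  then have "f t \<le> 0"
    using bound[OF \<open>0 < t\<close>] by linarith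
  then obtain x where x: "0 \<le> x" "x \<le> t" "f x = 0"
    using IVT2[of f t 0 0] f0 cont \<open>0 < t\<close> by auto
  with f0 have "0 < x"
    by (cases "x = 0") auto
  with bound[of x] x \<open>0 < c\<close> show False
    by simp
qed

lemma DERIV_ge_imp_linear_growth:
  fixes g :: "real \<Rightarrow> real"
  assumes deriv: "\<And>t. (g has_real_derivative g' t) (at t)"
    and ge: "\<And>t. 0 < t \<Longrightarrow> c \<le> g' t" and "0 < t"
  shows "g 0 + c * t \<le> g t"
proof -
  obtain z where "0 < z" "z < t" and z: "g t - g 0 = (t - 0) * g' z"
    using MVT2[of 0 t g g'] deriv \<open>0 < t\<close> by auto
  have "c * t \<le> g' z * t"
    using ge[OF \<open>0 < z\<close>] \<open>0 < t\<close> by (simp add: mult_right_mono)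
  then show ?thesis
    using z by (simp add: mult.commute)
qed

lemma has_real_derivative_left_inverse_mat_sin:
  fixes A B :: "real^'n^'n"
  assumes "B ** A = mat 1"
  shows "((\<lambda>t. (B ** mat_sin A t) $ i $ j) has_real_derivative mat_cos A t $ i $ j) (at t)"
proof -
  have "((\<lambda>t. \<Sum>v\<in>UNIV. B $ i $ v * mat_sin A t $ v $ j) has_real_derivative
      (\<Sum>v\<in>UNIV. B $ i $ v * (A ** mat_cos A t) $ v $ j)) (at t)"
    by (intro DERIV_sum DERIV_cmult has_real_derivative_mat_sin)
  also have "(\<Sum>v\<in>UNIV. B $ i $ v * (A ** mat_cos A t) $ v $ j) = (B ** (A ** mat_cos A t)) $ i $ j"
    by (simp add: matrix_matrix_mult_def)
  also have "\<dots> = mat_cos A t $ i $ j"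
    by (simp add: matrix_mul_assoc assms)
  finally show ?thesis
    by (simp add: matrix_matrix_mult_def)
qed

lemma abs_mult_mat_sin_le:
  fixes A B :: "real^'n^'n"
  assumes "transpose A = A"
  shows "\<bar>(B ** mat_sin A t) $ i $ u\<bar> \<le> (\<Sum>v\<in>UNIV. \<bar>B $ i $ v\<bar>)"
proof -
  have "\<bar>(B ** mat_sin A t) $ i $ u\<bar> \<le> (\<Sum>v\<in>UNIV. \<bar>B $ i $ v\<bar> * \<bar>mat_sin A t $ v $ u\<bar>)"
    by (simp add: matrix_matrix_mult_def sum_abs[THEN order_trans] abs_mult)
  also have "\<dots> \<le> (\<Sum>v\<in>UNIV. \<bar>B $ i $ v\<bar>)"
    by (intro sum_mono mult_right_le_one_le abs_mat_sin_le_1[OF assms]) auto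
  finally show ?thesis .
qed

lemma sedentary_bipartite_imp_mat_cos_diag_ge:
  fixes A :: "real^'n^'n"
  assumes "graph_bipartite A" and "sedentary A u"
  obtains c where "0 < c" and "\<And>t. 0 < t \<Longrightarrow> c \<le> mat_cos A t $ u $ u"
proof -
  obtain c where "0 < c" and c: "c \<le> (INF t\<in>{0<..}. cmod (transition A t $ u $ u))"
    using assms(2) unfolding sedentary_def by blast
  have abs_ge: "c \<le> \<bar>mat_cos A t $ u $ u\<bar>" if "0 < t" for t
  proof -
    have "(INF t\<in>{0<..}. cmod (transition A t $ u $ u)) \<le> cmod (transition A t $ u $ u)"
      by (rule cINF_lower) (auto intro: bdd_belowI[where m = 0] simp: that)
    then show ?thesis
      using c by (simp add: transition_eq_Complex bipartite_mat_sin_diag[OF assms(1)] complex_norm)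
  qed
  have "mat_cos A 0 $ u $ u = 1"
    by (simp add: mat_power_series_at_0 mat_def)
  then have "c \<le> mat_cos A t $ u $ u" if "0 < t" for t
    using continuous_ge_of_abs_ge[OF DERIV_isCont[OF has_real_derivative_mat_cos] _ \<open>0 < c\<close> abs_ge that]
    by simp
  with \<open>0 < c\<close> show thesis
    by (rule that)
qed

lemma mat_cos_diag_not_uniformly_positive:
  fixes A :: "real^'n^'n"
  assumes "transpose A = A" and "invertible A" and "0 < c"
  shows "\<not> (\<forall>t>0. c \<le> mat_cos A t $ u $ u)"
proof
  assume cos_ge: "\<forall>t>0. c \<le> mat_cos A t $ u $ u"
  obtain B where B: "B ** A = mat 1"
    using assms(2) invertible_left_inverse by blast
  define g where "g t = (B ** mat_sin A t) $ u $ u" for t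
  define K where "K = (\<Sum>v\<in>UNIV. \<bar>B $ u $ v\<bar>)"
  have dg: "(g has_real_derivative mat_cos A s $ u $ u) (at s)" for s
    unfolding g_def[abs_def] by (rule has_real_derivative_left_inverse_mat_sin[OF B])
  have bounded: "\<bar>g s\<bar> \<le> K" for s
    unfolding g_def K_def by (rule abs_mult_mat_sin_le[OF assms(1)])
  define t where "t = (K - g 0 + 1) / c"
  have "0 < t"
    using bounded[of 0] \<open>0 < c\<close> by (simp add: t_def)
  have "g 0 + c * t \<le> g t"
    using cos_ge by (intro DERIV_ge_imp_linear_growth[OF dg _ \<open>0 < t\<close>]) auto
  moreover have "g 0 + c * t = K + 1"
    using \<open>0 < c\<close> by (simp add: t_def)
  ultimately show False
    using bounded[of t] by linarith
qed

theorem corollary13: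
  fixes A :: "real^'n^'n"
  assumes "weighted_simple_graph A"
    and "graph_connected A"
    and "graph_bipartite A"
    and "det A \<noteq> 0"
  shows "\<forall>u. \<not> sedentary A u"
proof (intro allI notI)
  fix u
  assume "sedentary A u"
  then obtain c where "0 < c" and "\<And>t. 0 < t \<Longrightarrow> c \<le> mat_cos A t $ u $ u"
    using sedentary_bipartite_imp_mat_cos_diag_ge[OF assms(3)] by blast
  moreover have "transpose A = A"
    using assms(1) by (simp add: weighted_simple_graph_def transpose_def vec_eq_iff)
  moreover have "invertible A"
    using assms(4) by (simp add: invertible_det_nz)
  ultimately show False
    using mat_cos_diag_not_uniformly_positive by blast
qed

end
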